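(* Let $\Delta$ be a constant, $\delta \in (0,1)$ and $N \geq 1$. Fix a tree $\mathbb{T}$ rooted at $v$ with maximum degree $\Delta$, and let $S = \mathrm{boundary}_{\mathbb{T}, \delta}(v, N)$. Then $|S| \leq T(N) = \widetilde{O}\big(N^{1 - \log \frac{1}{1-\delta}/ \log \frac{\Delta}{1-\delta}}\big)$ and $\mathsf{depth}_{\mathbb{T}}(S) \leq O\big(\log_{\frac{\Delta-1}{1-\delta}}(N)\big)$, where $T(N)$ is the maximum of $|\mathrm{boundary}_{\mathbb{T}', \delta}(v', N)|$ over all trees $\mathbb{T}'$ of maximum degree $\Delta$ and roots $v'$.
   Context: For a rooted tree $\mathbb T$ and $\delta\in(0,1)$, the procedure $\mathrm{boundary}_{\mathbb T,\delta}(u,N)$ is defined recursively: let $C$ be the set of children of $u$ and $d=|C|$; if $N\le1$ return $\{u\}$; else if $C=\emptyset$ return $\emptyset$; else return $\bigcup_{w\in C}\mathrm{boundary}_{\mathbb T_w,\delta}(w,N\cdot\frac{1-\delta}{d})$, where $\mathbb T_w$ is the subtree rooted at $w$. For $S$ a set of vertices, $\mathsf{depth}_{\mathbb T}(S)=\max_{u\in S}\mathrm{dist}_{\mathbb T}(v,u)$ with $v$ the root. $\widetilde O$ and $O$ hide polylogarithmic factors and constants depending on $\Delta,\delta$. *)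

theory Defs
  imports Complex_Main
begin

text \<open>A vertex is identified with the path of child
  indices leading to it from the root; the root is the empty path, and the
  distance of a vertex from the root is the length of its path.\<close>

datatype rtree = Node "rtree list"

text \<open>The procedure boundary(u, N). Vertices of the returned set are paths from u.\<close>

function boundary :: "real \<Rightarrow> rtree \<Rightarrow> real \<Rightarrow> nat list set" where
  "boundary \<delta> (Node cs) N =
     (if N \<le> 1 then {[]}
      else if cs = [] then {}
      else (\<Union>(i, c) \<in> set (zip [0..<length cs] cs).
              (Cons i) ` boundary \<delta> c (N * (1 - \<delta>) / real (length cs))))"
  by pat_completeness auto
termination
  by (relation "measure (\<lambda>(_, t, _). size t)")
     (auto dest!: set_zip_rightD intro: le_imp_less_Suc size_list_estimation')

definition tdepth :: "nat list set \<Rightarrow> nat" where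
  "tdepth S = Max (insert 0 (length ` S))"

text \<open>Degree bounds: a non-root vertex has degree (#children + 1), the root has
  degree #children.\<close>

fun deg_below :: "nat \<Rightarrow> rtree \<Rightarrow> bool" where
  "deg_below \<Delta> (Node cs) = (length cs + 1 \<le> \<Delta> \<and> (\<forall>c \<in> set cs. deg_below \<Delta> c))"

fun max_deg_le :: "nat \<Rightarrow> rtree \<Rightarrow> bool" where
  "max_deg_le \<Delta> (Node cs) = (length cs \<le> \<Delta> \<and> (\<forall>c \<in> set cs. deg_below \<Delta> c))"

definition Tmax :: "nat \<Rightarrow> real \<Rightarrow> real \<Rightarrow> real" where
  "Tmax \<Delta> \<delta> N = Sup {real (card (boundary \<delta> t N)) | t. max_deg_le \<Delta> t}"

end

theory Submission
  imports Defs
begin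

text \<open>Write \<open>q = 1 - \<delta>\<close> and \<open>\<alpha> = 1 - ln (1/q) / ln (\<Delta>/q) = ln \<Delta> / ln (\<Delta>/q) \<in> [0, 1]\<close>, so that
  \<open>\<Delta> (q/\<Delta>) powr \<alpha> = 1\<close>. By induction on the tree, \<open>|boundary(t, N)| \<le> \<Delta> N powr \<alpha>\<close> for all
  \<open>N \<ge> q/\<Delta>\<close>: a call with \<open>N \<le> 1\<close> returns one vertex, and \<open>1 = \<Delta> (q/\<Delta>) powr \<alpha>\<close>; a vertex with
  \<open>m \<le> \<Delta>\<close> children passes \<open>N q / m\<close> to each of them, and
  \<open>m (N q / m) powr \<alpha> = N powr \<alpha> q powr \<alpha> m powr (1 - \<alpha>) \<le> N powr \<alpha> q powr \<alpha> \<Delta> powr (1 - \<alpha>) = N powr \<alpha>\<close>.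
  For the depth, the budget shrinks at least by the factor \<open>q\<close> per level and a vertex only
  recurses while its budget exceeds 1, so every returned vertex has depth at most \<open>1 + log (1/q) N\<close>.\<close>

declare boundary.simps [simp del]

lemma boundary_le_one: "N \<le> 1 \<Longrightarrow> boundary \<delta> t N = {[]}"
  by (cases t) (simp add: boundary.simps)

lemma boundary_Node:
  "1 < N \<Longrightarrow> boundary \<delta> (Node cs) N =
     (\<Union>(i, c) \<in> set (zip [0..<length cs] cs). (Cons i) ` boundary \<delta> c (N * (1 - \<delta>) / real (length cs)))"
  by (subst boundary.simps) auto

lemma finite_boundary: "finite (boundary \<delta> t N)"
  by (induction \<delta> t N rule: boundary.induct) (subst boundary.simps; auto)

lemma card_boundary_Node_le:
  assumes "1 < N"
    and "\<And>c. c \<in> set cs \<Longrightarrow> real (card (boundary \<delta> c (N * (1 - \<delta>) / real (length cs)))) \<le> B"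
  shows "real (card (boundary \<delta> (Node cs) N)) \<le> real (length cs) * B"
proof -
  define Z where "Z = set (zip [0..<length cs] cs)"
  define N' where "N' = N * (1 - \<delta>) / real (length cs)"
  have "card (boundary \<delta> (Node cs) N) \<le> (\<Sum>(i, c) \<in> Z. card ((Cons i) ` boundary \<delta> c N'))"
    unfolding boundary_Node[OF \<open>1 < N\<close>] Z_def N'_def split_def by (rule card_UN_le) simp
  also have "\<dots> = (\<Sum>(i, c) \<in> Z. card (boundary \<delta> c N'))"
    by (intro sum.cong refl) (auto simp: card_image)
  finally have "real (card (boundary \<delta> (Node cs) N)) \<le> (\<Sum>(i, c) \<in> Z. real (card (boundary \<delta> c N')))"
    by (simp add: split_def flip: of_nat_sum)
  also have "\<dots> \<le> (\<Sum>(i, c) \<in> Z. B)"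
    using assms(2) by (intro sum_mono) (auto simp: Z_def N'_def dest: set_zip_rightD)
  also have "\<dots> = real (length cs) * B"
    by (simp add: Z_def split_def distinct_card[OF distinct_zipI1[OF distinct_upt]])
  finally show ?thesis .
qed

definition boundary_exponent :: "real \<Rightarrow> real \<Rightarrow> real" where
  "boundary_exponent D q = 1 - ln (1 / q) / ln (D / q)"

lemma boundary_exponent_eq:
  assumes "1 \<le> D" "0 < q" "q < 1"
  shows "boundary_exponent D q = ln D / ln (D / q)"
proof -
  have "0 < ln (D / q)"
    using assms by (simp add: ln_div)
  then show ?thesis
    using assms by (simp add: boundary_exponent_def ln_div field_simps)
qed

lemma boundary_exponent_bounds:
  assumes "1 \<le> D" "0 < q" "q < 1"
  shows "0 \<le> boundary_exponent D q" "boundary_exponent D q \<le> 1"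
proof -
  have "0 < ln (D / q)" "ln D \<le> ln (D / q)"
    using assms by (simp_all add: ln_div)
  then show "0 \<le> boundary_exponent D q" "boundary_exponent D q \<le> 1"
    using assms by (simp_all add: boundary_exponent_eq)
qed

lemma boundary_exponent_balance:
  assumes "1 \<le> D" "0 < q" "q < 1"
  shows "D * (q / D) powr boundary_exponent D q = 1"
proof -
  have "ln (D * (q / D) powr boundary_exponent D q) = ln D - boundary_exponent D q * ln (D / q)"
    using assms by (simp add: ln_mult ln_powr ln_div algebra_simps)
  also have "\<dots> = 0"
    using assms by (simp add: boundary_exponent_eq ln_div)
  finally show ?thesis
    using assms by simp
qed

lemma boundary_exponent_split_le:
  assumes "1 \<le> m" "m \<le> D" "0 < q" "q < 1" "0 < N"
  shows "m * (N * q / m) powr boundary_exponent D q \<le> N powr boundary_exponent D q"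
proof -
  let ?\<alpha> = "boundary_exponent D q"
  have \<alpha>: "0 \<le> ?\<alpha>" "?\<alpha> \<le> 1"
    using boundary_exponent_bounds assms by auto
  have "m * (N * q / m) powr ?\<alpha> = N powr ?\<alpha> * (q powr ?\<alpha> * m powr (1 - ?\<alpha>))"
    using assms by (simp add: powr_mult powr_divide powr_diff)
  also have "\<dots> \<le> N powr ?\<alpha> * (q powr ?\<alpha> * D powr (1 - ?\<alpha>))"
    using assms \<alpha> by (intro mult_left_mono powr_mono2) auto
  also have "q powr ?\<alpha> * D powr (1 - ?\<alpha>) = D * (q / D) powr ?\<alpha>"
    using assms by (simp add: powr_divide powr_diff)
  also have "\<dots> = 1"
    using assms by (simp add: boundary_exponent_balance)
  finally show ?thesis
    by simp
qed

fun branching_le :: "nat \<Rightarrow> rtree \<Rightarrow> bool" where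
  "branching_le D (Node cs) = (length cs \<le> D \<and> (\<forall>c \<in> set cs. branching_le D c))"

lemma deg_below_imp_branching_le: "deg_below D t \<Longrightarrow> branching_le D t"
  by (induction t rule: deg_below.induct) auto

lemma max_deg_le_imp_branching_le: "max_deg_le D t \<Longrightarrow> branching_le D t"
  by (cases t) (auto intro: deg_below_imp_branching_le)

lemma card_boundary_le:
  fixes D :: nat
  assumes "branching_le D t" "1 \<le> D" "0 < \<delta>" "\<delta> < 1" "(1 - \<delta>) / D \<le> N"
  shows "real (card (boundary \<delta> t N)) \<le> D * N powr boundary_exponent D (1 - \<delta>)"
  using assms
proof (induction \<delta> t N rule: boundary.induct)
  case (1 \<delta> cs N)
  let ?q = "1 - \<delta>" and ?m = "length cs"
  let ?\<alpha> = "boundary_exponent D ?q"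
  have "0 < (1 - \<delta>) / D"
    using "1.prems" by simp
  then have "0 < N"
    using "1.prems"(5) by linarith
  show ?case
  proof (cases "N \<le> 1")
    case True
    have "1 = D * (?q / D) powr ?\<alpha>"
      using 1 by (simp add: boundary_exponent_balance)
    also have "\<dots> \<le> D * N powr ?\<alpha>"
      using 1 boundary_exponent_bounds[of D ?q] by (intro mult_left_mono powr_mono2) auto
    finally show ?thesis
      using True by (simp add: boundary_le_one)
  next
    case False
    let ?N' = "N * ?q / ?m"
    have "real (card (boundary \<delta> (Node cs) N)) \<le> ?m * (D * ?N' powr ?\<alpha>)"
    proof (rule card_boundary_Node_le)
      fix c assume c: "c \<in> set cs"
      then have "1 \<le> ?m"
        by (cases cs) auto
      then have "?q / D \<le> ?N'"
        using 1 False by (intro frac_le) auto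
      obtain i where ic: "(i, c) \<in> set (zip [0..<?m] cs)"
        using c by (auto simp: in_set_conv_nth set_zip)
      have "cs \<noteq> []"
        using c by auto
      from "1.IH"[OF False this ic refl] "1.prems" c \<open>?q / D \<le> ?N'\<close>
      show "real (card (boundary \<delta> c ?N')) \<le> D * ?N' powr ?\<alpha>"
        by simp
    qed (use False in simp)
    also have "\<dots> \<le> D * N powr ?\<alpha>"
    proof (cases "cs = []")
      case False
      then have "?m * ?N' powr ?\<alpha> \<le> N powr ?\<alpha>"
        using 1 \<open>0 < N\<close> by (intro boundary_exponent_split_le) (auto simp: Suc_le_eq)
      then show ?thesis
        by (simp add: mult.left_commute mult_left_mono)
    qed simp
    finally show ?thesis .
  qed
qed

lemma boundary_budget_gt_one:
  assumes "s \<in> boundary \<delta> t N" "s \<noteq> []"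
  shows "1 < N * (1 - \<delta>) ^ (length s - 1)"
  using assms
proof (induction \<delta> t N arbitrary: s rule: boundary.induct)
  case (1 \<delta> cs N)
  have "1 < N"
    using "1.prems" by (cases "N \<le> 1") (auto simp: boundary_le_one)
  with "1.prems" obtain i c s' where ic: "(i, c) \<in> set (zip [0..<length cs] cs)"
    and s: "s = i # s'" and s': "s' \<in> boundary \<delta> c (N * (1 - \<delta>) / length cs)"
    by (auto simp: boundary_Node)
  show ?case
  proof (cases "s' = []")
    case False
    have "cs \<noteq> []" "1 \<le> real (length cs)"
      using ic by (cases cs; auto)+
    moreover have "1 < N * (1 - \<delta>) ^ length s' / length cs"
      using "1.IH"[OF _ \<open>cs \<noteq> []\<close> ic refl s' False] \<open>1 < N\<close> False
      by (cases s') (auto simp: mult.assoc)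
    ultimately have "1 < N * (1 - \<delta>) ^ length s'"
      by (simp add: less_divide_eq)
    then show ?thesis
      using s by simp
  qed (use s \<open>1 < N\<close> in simp)
qed

lemma length_boundary_le:
  assumes "s \<in> boundary \<delta> t N" "0 < \<delta>" "\<delta> < 1" "1 \<le> N"
  shows "real (length s) \<le> 1 + log (1 / (1 - \<delta>)) N"
proof (cases "s = []")
  case False
  define L where "L = length s - 1"
  have "0 < ln (N * (1 - \<delta>) ^ L)"
    using boundary_budget_gt_one[OF assms(1) False] by (simp add: L_def)
  then have "real L * ln (1 / (1 - \<delta>)) < ln N"
    using assms by (simp add: ln_mult ln_realpow ln_div)
  then have "real L < log (1 / (1 - \<delta>)) N"
    using assms by (simp add: log_def pos_less_divide_eq)
  then show ?thesis
    using False by (simp add: L_def of_nat_diff)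
qed (use assms in simp)

lemma tdepth_le:
  assumes "finite S" "0 \<le> B" "\<And>s. s \<in> S \<Longrightarrow> real (length s) \<le> B"
  shows "real (tdepth S) \<le> B"
proof -
  have "tdepth S \<in> insert 0 (length ` S)"
    unfolding tdepth_def using assms(1) by (intro Max_in) auto
  then show ?thesis
    using assms by (auto simp: tdepth_def)
qed

lemma tdepth_boundary_le:
  assumes "0 < \<delta>" "\<delta> < 1" "1 \<le> N"
  shows "real (tdepth (boundary \<delta> t N)) \<le> 1 + log (1 / (1 - \<delta>)) N"
  using assms by (intro tdepth_le finite_boundary length_boundary_le) auto

lemma one_plus_log_le_log_base_mult:
  fixes a b x :: real
  assumes "1 < a" "a \<le> b" "0 < x"
  shows "1 + log a x \<le> log a b * (1 + log b x)"
proof -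
  have "1 \<le> log a b"
    using assms by simp
  moreover have "log a x = log a b * log b x"
    using assms log_base_change[of a b x] \<open>1 \<le> log a b\<close> by (simp add: field_simps)
  ultimately show ?thesis
    by (simp add: algebra_simps)
qed

lemma
  assumes "\<And>t. max_deg_le \<Delta> t \<Longrightarrow> real (card (boundary \<delta> t N)) \<le> B"
  shows card_boundary_le_Tmax: "max_deg_le \<Delta> t \<Longrightarrow> real (card (boundary \<delta> t N)) \<le> Tmax \<Delta> \<delta> N"
    and Tmax_le: "max_deg_le \<Delta> t \<Longrightarrow> Tmax \<Delta> \<delta> N \<le> B"
proof -
  let ?X = "{real (card (boundary \<delta> t N)) | t. max_deg_le \<Delta> t}"
  have "bdd_above ?X"
    using assms by (intro bdd_aboveI[where M = B]) auto
  then show "max_deg_le \<Delta> t \<Longrightarrow> real (card (boundary \<delta> t N)) \<le> Tmax \<Delta> \<delta> N"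
    unfolding Tmax_def by (intro cSup_upper) auto
  show "max_deg_le \<Delta> t \<Longrightarrow> Tmax \<Delta> \<delta> N \<le> B"
    unfolding Tmax_def using assms by (intro cSup_least) auto
qed

theorem proposition3p6:
  fixes \<Delta> :: nat and \<delta> :: real
  assumes "\<Delta> \<ge> 2" and "0 < \<delta>" and "\<delta> < 1"
  shows "\<exists>C > 0. \<exists>k :: nat. \<exists>D > 0. \<forall>N :: real. \<forall>t. N \<ge> 1 \<longrightarrow> max_deg_le \<Delta> t \<longrightarrow>
     real (card (boundary \<delta> t N)) \<le> Tmax \<Delta> \<delta> N
   \<and> Tmax \<Delta> \<delta> N \<le> C * N powr (1 - ln (1 / (1 - \<delta>)) / ln (real \<Delta> / (1 - \<delta>))) * (1 + ln N) ^ k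
   \<and> real (tdepth (boundary \<delta> t N)) \<le> D * (1 + log ((real \<Delta> - 1) / (1 - \<delta>)) N)"
proof (rule exI[of _ "real \<Delta>"],
    intro conjI exI[of _ "0 :: nat"] exI[of _ "log (1 / (1 - \<delta>)) ((real \<Delta> - 1) / (1 - \<delta>))"] allI impI)
  show "0 < real \<Delta>"
    using assms by simp
  have base: "1 < 1 / (1 - \<delta>)" "1 / (1 - \<delta>) \<le> (real \<Delta> - 1) / (1 - \<delta>)"
    using assms by (simp_all add: divide_right_mono)
  then show "0 < log (1 / (1 - \<delta>)) ((real \<Delta> - 1) / (1 - \<delta>))"
    by simp
  fix N :: real and t
  assume N: "1 \<le> N" and t: "max_deg_le \<Delta> t"
  have "(1 - \<delta>) / \<Delta> \<le> 1"
    using assms by simp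
  with N have "(1 - \<delta>) / \<Delta> \<le> N"
    by linarith
  have size: "real (card (boundary \<delta> t' N)) \<le> \<Delta> * N powr boundary_exponent \<Delta> (1 - \<delta>)"
    if "max_deg_le \<Delta> t'" for t'
    using that assms \<open>(1 - \<delta>) / \<Delta> \<le> N\<close> by (intro card_boundary_le max_deg_le_imp_branching_le) auto
  show "real (card (boundary \<delta> t N)) \<le> Tmax \<Delta> \<delta> N"
    using size t by (rule card_boundary_le_Tmax)
  show "Tmax \<Delta> \<delta> N \<le> real \<Delta> * N powr (1 - ln (1 / (1 - \<delta>)) / ln (real \<Delta> / (1 - \<delta>))) * (1 + ln N) ^ 0"
    using Tmax_le[OF size t] by (simp add: boundary_exponent_def)
  show "real (tdepth (boundary \<delta> t N))
      \<le> log (1 / (1 - \<delta>)) ((real \<Delta> - 1) / (1 - \<delta>)) * (1 + log ((real \<Delta> - 1) / (1 - \<delta>)) N)"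
    using N by (intro order_trans[OF tdepth_boundary_le[OF assms(2,3) N] one_plus_log_le_log_base_mult[OF base]]) simp
qed

end
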